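(* Let $X$ be a complete hyperbolic surface of finite area, $p$ a cusp and $N_p(r)$ a horoball neighborhood of $p$. For positive integers $n,m$, the number of intersection points (with multiplicity) between an $n$-excursion and an $m$-excursion in $N_p(r)$ is at most $2\min(n,m)+2$.
   Context: $N_p(r)$ is the embedded horoball neighborhood of $p$ whose boundary horocycle $\partial N_p(r)$ has length $r$. Lift to the upper half-plane with $p$ at $\infty$, so $N_p(r)$ lifts to $\{\mathrm{Im}\,z\ge h\}$ and the stabilizer of $\infty$ is generated by a translation $z\mapsto z+w$. An $n$-excursion in $N_p(r)$ is a geodesic arc contained in $N_p(r)$ with both endpoints on $\partial N_p(r)$ whose lifted endpoints $z_1,z_2$ satisfy $n\le|\mathrm{Re}\,z_1-\mathrm{Re}\,z_2|/w<n+1$ (winding number $n$ around the cusp). *)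

theory Defs
  imports Complex_Main
begin

text \<open>Model of the cusp neighbourhood N_p(r): the quotient of the closed horoball
  {z. Im z \<ge> h} in the upper half-plane by the translation z \<mapsto> z + w.
  A geodesic arc lying in the horoball with both endpoints on the horocycle Im z = h
  lifts to the part above height h of a Euclidean semicircle centred at a real point c
  with radius R > h (a hyperbolic geodesic).\<close>

definition excursion_arc :: "real \<Rightarrow> real \<Rightarrow> real \<Rightarrow> complex set" where
  "excursion_arc h c R = {z. cmod (z - complex_of_real c) = R \<and> h \<le> Im z}"

definition exc_left :: "real \<Rightarrow> real \<Rightarrow> real \<Rightarrow> complex" where
  "exc_left h c R = Complex (c - sqrt (R\<^sup>2 - h\<^sup>2)) h"

definition exc_right :: "real \<Rightarrow> real \<Rightarrow> real \<Rightarrow> complex" where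
  "exc_right h c R = Complex (c + sqrt (R\<^sup>2 - h\<^sup>2)) h"

definition is_excursion :: "real \<Rightarrow> real \<Rightarrow> nat \<Rightarrow> real \<Rightarrow> real \<Rightarrow> bool" where
  "is_excursion w h n c R \<longleftrightarrow> h < R \<and>
     real n \<le> \<bar>Re (exc_left h c R) - Re (exc_right h c R)\<bar> / w \<and>
     \<bar>Re (exc_left h c R) - Re (exc_right h c R)\<bar> / w < real n + 1"

text \<open>Intersection points with multiplicity between the projections of two lifted arcs
  A, B to the quotient: pairs of points (one on each lifted arc) that are identified
  by the deck group generated by z \<mapsto> z + w.\<close>
definition intersection_pairs :: "real \<Rightarrow> complex set \<Rightarrow> complex set \<Rightarrow> (complex \<times> complex) set" where
  "intersection_pairs w A B =
     {(z1, z2). z1 \<in> A \<and> z2 \<in> B \<and> (\<exists>k::int. z1 = z2 + of_int k * complex_of_real w)}"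

end

theory Submission
  imports Defs
begin

text \<open>Lift both excursions so that the first one is fixed. A point of the quotient lying on
  both projected arcs is a point of the first arc lying on some translate of the second by
  k w, k an integer, so it is recorded by that k. Two different circles centred on the real
  axis meet at most once in the upper half-plane, so distinct intersection points have distinct
  k. If s and s' are the half-widths of the two arcs, a translate meets the first arc above the
  horocycle only when its centre is at distance between |s - s'| and s + s' from c1: these k
  fill two windows of length 2 min(s, s') < (min(n,m) + 1) w, each containing at most
  min(n,m) + 1 integers.\<close>

lemma excursion_arc_translate_iff:
  "z + complex_of_real t \<in> excursion_arc h (c + t) R \<longleftrightarrow> z \<in> excursion_arc h c R"
  unfolding excursion_arc_def by (simp add: algebra_simps)

lemma intersection_pairs_excursion_arc_iff:
  "(z1, z2) \<in> intersection_pairs w (excursion_arc h c1 R1) (excursion_arc h c2 R2) \<longleftrightarrow>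
     (\<exists>k::int. z2 = z1 - of_int k * complex_of_real w \<and>
        z1 \<in> excursion_arc h c1 R1 \<and> z1 \<in> excursion_arc h (c2 + of_int k * w) R2)"
proof -
  have "z2 \<in> excursion_arc h c2 R2 \<longleftrightarrow> z1 \<in> excursion_arc h (c2 + of_int k * w) R2"
    if "z1 = z2 + of_int k * complex_of_real w" for k :: int
    using that excursion_arc_translate_iff[of z2 "of_int k * w" h c2 R2] by simp
  then show ?thesis
    unfolding intersection_pairs_def by (auto simp: algebra_simps)
qed

lemma excursion_arc_eq:
  "z \<in> excursion_arc h c R \<longleftrightarrow> (Re z - c)\<^sup>2 + (Im z)\<^sup>2 = R\<^sup>2 \<and> 0 \<le> R \<and> h \<le> Im z"
proof -
  have "cmod (z - complex_of_real c) = R \<longleftrightarrow> (Re z - c)\<^sup>2 + (Im z)\<^sup>2 = R\<^sup>2 \<and> 0 \<le> R"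
    using cmod_power2[of "z - complex_of_real c"] by (auto simp: power2_eq_iff_nonneg)
  then show ?thesis unfolding excursion_arc_def by simp
qed

lemma excursion_arcs_meet_imp_centre_dist:
  assumes "z \<in> excursion_arc h a R1" "z \<in> excursion_arc h b R2" "0 \<le> h"
  defines "s1 \<equiv> sqrt (R1\<^sup>2 - h\<^sup>2)" and "s2 \<equiv> sqrt (R2\<^sup>2 - h\<^sup>2)"
  shows "\<bar>s1 - s2\<bar> \<le> \<bar>a - b\<bar> \<and> \<bar>a - b\<bar> \<le> s1 + s2"
proof -
  define x y where "x = Re z" and "y = Im z"
  have e1: "(x - a)\<^sup>2 + y\<^sup>2 = R1\<^sup>2" and e2: "(x - b)\<^sup>2 + y\<^sup>2 = R2\<^sup>2" and "h \<le> y"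
    using assms(1,2) unfolding excursion_arc_eq x_def y_def by auto
  then have hy: "h\<^sup>2 \<le> y\<^sup>2" using \<open>0 \<le> h\<close> by (simp add: power_mono)
  have "h\<^sup>2 \<le> R1\<^sup>2" using e1 hy zero_le_power2[of "x - a"] by linarith
  then have s1sq: "s1\<^sup>2 = R1\<^sup>2 - h\<^sup>2" and "s1 \<ge> 0" unfolding s1_def by simp_all
  have "h\<^sup>2 \<le> R2\<^sup>2" using e2 hy zero_le_power2[of "x - b"] by linarith
  then have s2sq: "s2\<^sup>2 = R2\<^sup>2 - h\<^sup>2" and "s2 \<ge> 0" unfolding s2_def by simp_all
  have "\<bar>x - a\<bar>\<^sup>2 \<le> s1\<^sup>2" using e1 hy s1sq by simp
  then have xa: "\<bar>x - a\<bar> \<le> s1" using \<open>s1 \<ge> 0\<close> by (rule power2_le_imp_le)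
  have "\<bar>x - b\<bar>\<^sup>2 \<le> s2\<^sup>2" using e2 hy s2sq by simp
  then have xb: "\<bar>x - b\<bar> \<le> s2" using \<open>s2 \<ge> 0\<close> by (rule power2_le_imp_le)
  have "(s1 - s2) * (s1 + s2) = (b - a) * ((x - a) + (x - b))"
    using e1 e2 s1sq s2sq by (simp add: algebra_simps power2_eq_square)
  then have "\<bar>s1 - s2\<bar> * (s1 + s2) = \<bar>b - a\<bar> * \<bar>(x - a) + (x - b)\<bar>"
    using \<open>s1 \<ge> 0\<close> \<open>s2 \<ge> 0\<close> by (metis abs_mult abs_of_nonneg add_nonneg_nonneg)
  also have "\<dots> \<le> \<bar>b - a\<bar> * (s1 + s2)"
    using xa xb by (intro mult_left_mono) auto
  finally have "\<bar>s1 - s2\<bar> \<le> \<bar>a - b\<bar>"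
    using \<open>s1 \<ge> 0\<close> \<open>s2 \<ge> 0\<close>
    by (cases "s1 + s2 = 0") (auto simp: abs_minus_commute)
  moreover have "\<bar>a - b\<bar> \<le> s1 + s2" using xa xb by linarith
  ultimately show ?thesis ..
qed

lemma excursion_arcs_meet_at_most_once:
  assumes "z \<in> excursion_arc h a R1" "z \<in> excursion_arc h b R2"
    and "z' \<in> excursion_arc h a R1" "z' \<in> excursion_arc h b R2"
    and "0 < h" and "\<not> (a = b \<and> R1 = R2)"
  shows "z = z'"
proof -
  have e1: "(Re z - a)\<^sup>2 + (Im z)\<^sup>2 = R1\<^sup>2" and e2: "(Re z - b)\<^sup>2 + (Im z)\<^sup>2 = R2\<^sup>2"
    and e1': "(Re z' - a)\<^sup>2 + (Im z')\<^sup>2 = R1\<^sup>2" and e2': "(Re z' - b)\<^sup>2 + (Im z')\<^sup>2 = R2\<^sup>2"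
    and "0 \<le> R1" "0 \<le> R2" "0 < Im z" "0 < Im z'"
    using assms(1-5) unfolding excursion_arc_eq by auto
  have "a \<noteq> b"
  proof
    assume "a = b"
    with e1 e2 have "R1\<^sup>2 = R2\<^sup>2" by simp
    with \<open>0 \<le> R1\<close> \<open>0 \<le> R2\<close> \<open>a = b\<close> assms(6) show False by (simp add: power2_eq_iff_nonneg)
  qed
  text \<open>Subtracting the two circle equations leaves a linear equation in Re z (the radical axis).\<close>
  have "(b - a) * (2 * Re z - a - b) = R1\<^sup>2 - R2\<^sup>2"
    and "(b - a) * (2 * Re z' - a - b) = R1\<^sup>2 - R2\<^sup>2"
    using e1 e2 e1' e2' by (simp_all add: algebra_simps power2_eq_square)
  then have "(b - a) * (2 * Re z - a - b) = (b - a) * (2 * Re z' - a - b)" by simp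
  with \<open>a \<noteq> b\<close> have "Re z = Re z'" by simp
  with e1 e1' have "(Im z)\<^sup>2 = (Im z')\<^sup>2" by simp
  with \<open>0 < Im z\<close> \<open>0 < Im z'\<close> have "Im z = Im z'" by (simp add: power2_eq_iff_nonneg)
  with \<open>Re z = Re z'\<close> show ?thesis by (simp add: complex_eq_iff)
qed

lemma card_int_multiples_in_interval:
  fixes lo L w :: real and M :: nat
  assumes "0 < w" and "L < (real M + 1) * w"
  shows "finite {k::int. lo \<le> k * w \<and> k * w \<le> lo + L}"
    and "card {k::int. lo \<le> k * w \<and> k * w \<le> lo + L} \<le> M + 1"
proof -
  let ?A = "{k::int. lo \<le> k * w \<and> k * w \<le> lo + L}"
  have sub: "?A \<subseteq> {\<lceil>lo / w\<rceil> .. \<lfloor>(lo + L) / w\<rfloor>}"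
    using \<open>0 < w\<close> by (auto simp: field_simps ceiling_le_iff le_floor_iff)
  have "real_of_int (\<lfloor>(lo + L) / w\<rfloor> - \<lceil>lo / w\<rceil>) \<le> (lo + L) / w - lo / w"
    using of_int_floor_le[of "(lo + L) / w"] le_of_int_ceiling[of "lo / w"] by linarith
  also have "\<dots> = L / w" by (simp add: diff_divide_distrib[symmetric])
  also have "\<dots> < real M + 1" using assms by (simp add: field_simps)
  finally have "card {\<lceil>lo / w\<rceil> .. \<lfloor>(lo + L) / w\<rfloor>} \<le> M + 1" by simp
  moreover have "card ?A \<le> card {\<lceil>lo / w\<rceil> .. \<lfloor>(lo + L) / w\<rfloor>}"
    using sub by (intro card_mono) auto
  ultimately show "card ?A \<le> M + 1" by linarith
  show "finite ?A" using sub by (rule finite_subset) simp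
qed

lemma card_int_multiples_in_annulus:
  fixes x lo hi w :: real and M :: nat
  assumes "0 < w" and "hi - lo < (real M + 1) * w"
  shows "finite {k::int. lo \<le> \<bar>x - k * w\<bar> \<and> \<bar>x - k * w\<bar> \<le> hi}"
    and "card {k::int. lo \<le> \<bar>x - k * w\<bar> \<and> \<bar>x - k * w\<bar> \<le> hi} \<le> 2 * M + 2"
proof -
  let ?K = "{k::int. lo \<le> \<bar>x - k * w\<bar> \<and> \<bar>x - k * w\<bar> \<le> hi}"
  let ?below = "{k::int. x - hi \<le> k * w \<and> k * w \<le> x - hi + (hi - lo)}"
  let ?above = "{k::int. x + lo \<le> k * w \<and> k * w \<le> x + lo + (hi - lo)}"
  note below = card_int_multiples_in_interval[OF assms, of "x - hi"]
  note above = card_int_multiples_in_interval[OF assms, of "x + lo"]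
  have sub: "?K \<subseteq> ?below \<union> ?above" by (auto split: abs_split)
  with below above show "finite ?K" by (meson finite_UnI finite_subset)
  have "card ?K \<le> card (?below \<union> ?above)"
    using sub below above by (intro card_mono) auto
  also have "\<dots> \<le> card ?below + card ?above" by (rule card_Un_le)
  finally show "card ?K \<le> 2 * M + 2" using below above by linarith
qed

lemma is_excursion_width_less:
  assumes "is_excursion w h n c R" and "0 < w"
  shows "2 * sqrt (R\<^sup>2 - h\<^sup>2) < (real n + 1) * w"
  using assms unfolding is_excursion_def exc_left_def exc_right_def
  by (simp_all add: field_simps abs_less_iff)

text \<open>On an intersection pair the quotient is already the integer k with fst p = snd p + k w;
  rounding only moves it into int.\<close>
definition deck_index :: "real \<Rightarrow> complex \<times> complex \<Rightarrow> int" where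
  "deck_index w p = round (Re (fst p - snd p) / w)"

lemma intersection_pairs_deck_index:
  assumes "p \<in> intersection_pairs w (excursion_arc h c1 R1) (excursion_arc h c2 R2)" and "w \<noteq> 0"
  defines "k \<equiv> deck_index w p"
  shows "fst p \<in> excursion_arc h c1 R1" and "fst p \<in> excursion_arc h (c2 + of_int k * w) R2"
    and "snd p = fst p - of_int k * complex_of_real w"
proof -
  from assms(1) have "(fst p, snd p) \<in> intersection_pairs w (excursion_arc h c1 R1) (excursion_arc h c2 R2)"
    by simp
  then obtain j :: int where j: "snd p = fst p - of_int j * complex_of_real w"
    "fst p \<in> excursion_arc h c1 R1" "fst p \<in> excursion_arc h (c2 + of_int j * w) R2"
    unfolding intersection_pairs_excursion_arc_iff by blast
  moreover have "k = j" using j(1) \<open>w \<noteq> 0\<close> unfolding k_def deck_index_def by simp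
  ultimately show "fst p \<in> excursion_arc h c1 R1" "fst p \<in> excursion_arc h (c2 + of_int k * w) R2"
    "snd p = fst p - of_int k * complex_of_real w" by simp_all
qed

lemma inj_on_deck_index:
  assumes "w \<noteq> 0" and "0 < h" and "\<not> (R1 = R2 \<and> (\<exists>k::int. c1 = c2 + of_int k * w))"
  shows "inj_on (deck_index w) (intersection_pairs w (excursion_arc h c1 R1) (excursion_arc h c2 R2))"
proof (rule inj_onI)
  fix p q
  assume "p \<in> intersection_pairs w (excursion_arc h c1 R1) (excursion_arc h c2 R2)"
    and "q \<in> intersection_pairs w (excursion_arc h c1 R1) (excursion_arc h c2 R2)"
    and "deck_index w p = deck_index w q"
  note p = intersection_pairs_deck_index[OF this(1) \<open>w \<noteq> 0\<close>]
    and q = intersection_pairs_deck_index[OF this(2) \<open>w \<noteq> 0\<close>, folded this(3)]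
  have "fst p = fst q"
    using excursion_arcs_meet_at_most_once[OF p(1,2) q(1,2) \<open>0 < h\<close>] assms(3) by blast
  with p(3) q(3) show "p = q" by (simp add: prod_eq_iff)
qed

lemma deck_index_in_annulus:
  assumes "p \<in> intersection_pairs w (excursion_arc h c1 R1) (excursion_arc h c2 R2)"
    and "w \<noteq> 0" and "0 \<le> h"
  defines "s1 \<equiv> sqrt (R1\<^sup>2 - h\<^sup>2)" and "s2 \<equiv> sqrt (R2\<^sup>2 - h\<^sup>2)" and "k \<equiv> deck_index w p"
  shows "\<bar>s1 - s2\<bar> \<le> \<bar>(c1 - c2) - k * w\<bar> \<and> \<bar>(c1 - c2) - k * w\<bar> \<le> s1 + s2"
  using excursion_arcs_meet_imp_centre_dist[OF intersection_pairs_deck_index(1,2)[OF assms(1,2)] \<open>0 \<le> h\<close>]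
  unfolding s1_def s2_def k_def by (simp add: algebra_simps)

theorem lemma4p3:
  fixes w h c1 R1 c2 R2 :: real and n m :: nat
  assumes "w > 0" and "h > 0"
    and "n \<ge> 1" and "m \<ge> 1"
    and "is_excursion w h n c1 R1"
    and "is_excursion w h m c2 R2"
    and "\<not> (R1 = R2 \<and> (\<exists>k::int. c1 = c2 + of_int k * w))"
  shows "finite (intersection_pairs w (excursion_arc h c1 R1) (excursion_arc h c2 R2))
     \<and> card (intersection_pairs w (excursion_arc h c1 R1) (excursion_arc h c2 R2))
         \<le> 2 * min n m + 2"
proof -
  let ?P = "intersection_pairs w (excursion_arc h c1 R1) (excursion_arc h c2 R2)"
  define s1 s2 where "s1 = sqrt (R1\<^sup>2 - h\<^sup>2)" and "s2 = sqrt (R2\<^sup>2 - h\<^sup>2)"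
  define K where "K = {k::int. \<bar>s1 - s2\<bar> \<le> \<bar>(c1 - c2) - k * w\<bar> \<and> \<bar>(c1 - c2) - k * w\<bar> \<le> s1 + s2}"
  have "2 * s1 < (real n + 1) * w" "2 * s2 < (real m + 1) * w"
    using is_excursion_width_less[OF assms(5,1)] is_excursion_width_less[OF assms(6,1)]
    unfolding s1_def s2_def by simp_all
  then have "(s1 + s2) - \<bar>s1 - s2\<bar> < (real (min n m) + 1) * w"
    using \<open>w > 0\<close> by (cases "n \<le> m") (auto simp: min_def abs_if)
  note K_bounds = card_int_multiples_in_annulus[OF \<open>w > 0\<close> this, of "c1 - c2", folded K_def]
  have "deck_index w ` ?P \<subseteq> K"
    using deck_index_in_annulus[of _ w h c1 R1 c2 R2] \<open>w > 0\<close> \<open>h > 0\<close>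
    unfolding K_def s1_def s2_def by force
  moreover have "inj_on (deck_index w) ?P"
    using inj_on_deck_index[of w h R1 R2 c1 c2] assms(1,2,7) by simp
  ultimately show ?thesis
    using K_bounds by (meson card_inj_on_le inj_on_finite le_trans)
qed

end
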